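(* Let $T$ be an interval, and let $u\in H^1_{loc}(T;\mathcal V)\cap C^0(T;\mathcal V)$ with $u(t)\in\mathcal V_{[0,1]}$ for all $t\in T$, and $\beta:T\to\mathcal V$, be such that for a.e. $t\in T$ \[ \varepsilon \frac{du}{dt} + \varepsilon\Delta u(t)-u(t)+\overline{u(t)}\,\mathbf{1} = \beta(t) - \overline{\beta(t)}\,\mathbf{1} ,\qquad \beta(t)\in \mathcal{B}(u(t)). \] Write $\bar u:=\overline{u(t)}$. Then for a.e. $t\in T$ and all $i\in V$, \[ \beta_i(t) -\overline{\beta(t)}= \begin{cases} \bar u+\varepsilon(\Delta u(t))_i, &\text{if }u_i(t) = 0,\\ -\overline{\beta(t)}, &\text{if }u_i(t) \in (0,1),\\ \bar u-1+\varepsilon(\Delta u(t))_i, &\text{if }u_i(t) = 1. \end{cases} \]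
   Context: $G=(V,E)$ is a finite, simple, connected, undirected graph with weights $\omega_{ij}=\omega_{ji}>0$ for $ij\in E$, $\omega_{ij}=0$ otherwise; $d_i=\sum_j\omega_{ij}$, $r\in[0,1]$ fixed. $\mathcal V$ = functions $V\to\mathbb R$ with inner product $\langle u,v\rangle_{\mathcal V}=\sum_i u_iv_id_i^r$; $\mathcal V_X$ = functions $V\to X$. $(\Delta u)_i=d_i^{-r}\sum_j\omega_{ij}(u_i-u_j)$. $\mathbf 1$ is the all-ones function, $\mathcal M(u)=\langle u,\mathbf 1\rangle_{\mathcal V}$, and $\bar v:=\mathcal M(v)/\mathcal M(\mathbf 1)$ for $v\in\mathcal V$. $\varepsilon>0$. For $u\in\mathcal V_{[0,1]}$, $\mathcal B(u)$ is the set of $\beta\in\mathcal V$ with $\beta_i\ge0$ if $u_i=0$, $\beta_i=0$ if $0<u_i<1$, $\beta_i\le0$ if $u_i=1$ (and $\mathcal B(u)=\emptyset$ if $u\notin\mathcal V_{[0,1]}$). $H^1_{loc}(T;\mathcal V)$: functions $T\to\mathcal V$ each of whose components lies in $H^1((a,b))$ for all $a,b\in T$. *)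

theory Defs
  imports "HOL-Analysis.Analysis"
begin

definition wgraph :: "('v::finite \<Rightarrow> 'v \<Rightarrow> real) \<Rightarrow> bool" where
  "wgraph w \<longleftrightarrow> (\<forall>i j. w i j = w j i) \<and> (\<forall>i j. w i j \<ge> 0) \<and> (\<forall>i. w i i = 0)
     \<and> (\<forall>i j. (i, j) \<in> {(x, y). w x y > 0}\<^sup>*)"

definition degree :: "('v::finite \<Rightarrow> 'v \<Rightarrow> real) \<Rightarrow> 'v \<Rightarrow> real" where
  "degree w i = (\<Sum>j\<in>UNIV. w i j)"

definition graph_laplacian :: "('v::finite \<Rightarrow> 'v \<Rightarrow> real) \<Rightarrow> real \<Rightarrow> ('v \<Rightarrow> real) \<Rightarrow> 'v \<Rightarrow> real" where
  "graph_laplacian w r u i = degree w i powr (- r) * (\<Sum>j\<in>UNIV. w i j * (u i - u j))"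

definition graph_mass :: "('v::finite \<Rightarrow> 'v \<Rightarrow> real) \<Rightarrow> real \<Rightarrow> ('v \<Rightarrow> real) \<Rightarrow> real" where
  "graph_mass w r u = (\<Sum>i\<in>UNIV. u i * degree w i powr r)"

definition graph_mean :: "('v::finite \<Rightarrow> 'v \<Rightarrow> real) \<Rightarrow> real \<Rightarrow> ('v \<Rightarrow> real) \<Rightarrow> real" where
  "graph_mean w r v = graph_mass w r v / graph_mass w r (\<lambda>_. 1)"

definition Bset :: "('v \<Rightarrow> real) \<Rightarrow> ('v \<Rightarrow> real) set" where
  "Bset u = (if (\<forall>i. u i \<in> {0..1}) then
      {\<beta>. \<forall>i. (u i = 0 \<longrightarrow> \<beta> i \<ge> 0) \<and> (0 < u i \<and> u i < 1 \<longrightarrow> \<beta> i = 0)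
               \<and> (u i = 1 \<longrightarrow> \<beta> i \<le> 0)}
    else {})"

definition smooth_fun :: "(real \<Rightarrow> real) \<Rightarrow> bool" where
  "smooth_fun \<phi> \<longleftrightarrow> (\<forall>n. ((deriv ^^ n) \<phi>) differentiable_on UNIV)"

definition test_fun :: "(real \<Rightarrow> real) \<Rightarrow> real \<Rightarrow> real \<Rightarrow> bool" where
  "test_fun \<phi> a b \<longleftrightarrow> smooth_fun \<phi> \<and> compact (closure {x. \<phi> x \<noteq> 0})
      \<and> closure {x. \<phi> x \<noteq> 0} \<subseteq> {a<..<b}"

definition L2_on :: "(real \<Rightarrow> real) \<Rightarrow> real \<Rightarrow> real \<Rightarrow> bool" where
  "L2_on f a b \<longleftrightarrow> (\<lambda>x. indicator {a<..<b} x * f x) \<in> borel_measurable lebesgue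
      \<and> set_integrable lebesgue {a<..<b} (\<lambda>x. (f x)\<^sup>2)"

definition weak_deriv_on :: "(real \<Rightarrow> real) \<Rightarrow> (real \<Rightarrow> real) \<Rightarrow> real \<Rightarrow> real \<Rightarrow> bool" where
  "weak_deriv_on f g a b \<longleftrightarrow> (\<forall>\<phi>. test_fun \<phi> a b \<longrightarrow>
      (LINT x:{a<..<b}|lebesgue. f x * deriv \<phi> x) = - (LINT x:{a<..<b}|lebesgue. g x * \<phi> x))"

definition H1_on :: "(real \<Rightarrow> real) \<Rightarrow> real \<Rightarrow> real \<Rightarrow> bool" where
  "H1_on f a b \<longleftrightarrow> L2_on f a b \<and> (\<exists>g. L2_on g a b \<and> weak_deriv_on f g a b)"

definition H1_loc :: "real set \<Rightarrow> (real \<Rightarrow> 'v \<Rightarrow> real) \<Rightarrow> bool" where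
  "H1_loc T u \<longleftrightarrow> (\<forall>i. \<forall>a\<in>T. \<forall>b\<in>T. H1_on (\<lambda>t. u t i) a b)"

end

theory Submission
  imports Defs
begin

text \<open>
  Where \<open>0 < u\<^sub>i(t) < 1\<close>, the constraint \<open>\<beta>(t) \<in> B(u(t))\<close> forces \<open>\<beta>\<^sub>i(t) = 0\<close>. Where
  \<open>u\<^sub>i(t) \<in> {0, 1}\<close>, the component \<open>u\<^sub>i\<close> attains its minimum or maximum over \<open>T\<close>, and
  the weak derivative of a continuous function vanishes almost everywhere on the set of its
  extremal points: testing against smooth plateau functions that approximate the indicator of
  \<open>[s, t]\<close> shows that \<open>u\<^sub>i\<close> is an antiderivative of \<open>u\<^sub>i'\<close>, and at a Lebesgue point of
  \<open>u\<^sub>i'\<close> where \<open>u\<^sub>i\<close> is minimal the right difference quotients are \<open>\<ge> 0\<close> and the left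
  ones \<open>\<le> 0\<close>. So \<open>du\<^sub>i/dt = 0\<close> almost everywhere on \<open>{u\<^sub>i \<in> {0, 1}}\<close>, and there the
  evolution equation reduces to the claimed identities.
\<close>

section \<open>Smooth test functions\<close>

definition smooth_upto :: "nat \<Rightarrow> (real \<Rightarrow> real) \<Rightarrow> bool" where
  "smooth_upto n f \<longleftrightarrow> (\<forall>k\<le>n. (deriv ^^ k) f differentiable_on UNIV)"

lemma smooth_upto_0: "smooth_upto 0 f \<longleftrightarrow> f differentiable_on UNIV"
  by (simp add: smooth_upto_def)

lemma smooth_upto_Suc:
  "smooth_upto (Suc n) f \<longleftrightarrow> f differentiable_on UNIV \<and> smooth_upto n (deriv f)"
proof -
  have "(\<forall>k\<le>Suc n. P k) \<longleftrightarrow> P 0 \<and> (\<forall>k\<le>n. P (Suc k))" for P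
    by (metis Suc_le_mono le0 not0_implies_Suc)
  then show ?thesis
    unfolding smooth_upto_def by (simp add: funpow_Suc_right del: funpow.simps)
qed

lemma smooth_upto_Suc_imp: "smooth_upto (Suc n) f \<Longrightarrow> smooth_upto n f"
  by (simp add: smooth_upto_def)

lemma differentiable_on_UNIV_DERIV:
  fixes f :: "real \<Rightarrow> real"
  shows "f differentiable_on UNIV \<Longrightarrow> (f has_real_derivative deriv f x) (at x)"
  by (meson DERIV_deriv_iff_real_differentiable UNIV_I differentiable_on_def)

lemma DERIV_imp_differentiable_on_UNIV:
  fixes f :: "real \<Rightarrow> real"
  shows "(\<And>x. (f has_real_derivative D x) (at x)) \<Longrightarrow> f differentiable_on UNIV"
  by (meson differentiable_at_imp_differentiable_on real_differentiable_def)

lemma smooth_upto_const: "smooth_upto n (\<lambda>x. c)"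
  by (induction n arbitrary: c) (simp_all add: smooth_upto_0 smooth_upto_Suc)

lemma smooth_upto_add:
  "smooth_upto n f \<Longrightarrow> smooth_upto n g \<Longrightarrow> smooth_upto n (\<lambda>x. f x + g x)"
proof (induction n arbitrary: f g)
  case 0
  then show ?case by (simp add: smooth_upto_0 differentiable_on_add)
next
  case (Suc n)
  then have "deriv (\<lambda>x. f x + g x) = (\<lambda>x. deriv f x + deriv g x)"
    by (intro ext DERIV_imp_deriv DERIV_add differentiable_on_UNIV_DERIV) (simp_all add: smooth_upto_Suc)
  with Suc show ?case by (simp add: smooth_upto_Suc differentiable_on_add)
qed

lemma smooth_upto_mult:
  "smooth_upto n f \<Longrightarrow> smooth_upto n g \<Longrightarrow> smooth_upto n (\<lambda>x. f x * g x)"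
proof (induction n arbitrary: f g)
  case 0
  then show ?case by (simp add: smooth_upto_0 differentiable_on_mult)
next
  case (Suc n)
  then have f: "f differentiable_on UNIV" "smooth_upto n f" "smooth_upto n (deriv f)"
    and g: "g differentiable_on UNIV" "smooth_upto n g" "smooth_upto n (deriv g)"
    using smooth_upto_Suc_imp by (auto simp: smooth_upto_Suc)
  have "deriv (\<lambda>x. f x * g x) = (\<lambda>x. deriv f x * g x + deriv g x * f x)"
    by (intro ext DERIV_imp_deriv DERIV_mult differentiable_on_UNIV_DERIV f g)
  with f g show ?case
    by (simp add: smooth_upto_Suc differentiable_on_mult Suc.IH smooth_upto_add)
qed

lemma DERIV_compose_affine:
  fixes f :: "real \<Rightarrow> real"
  assumes "f differentiable_on UNIV"
  shows "((\<lambda>x. f (c * x + d)) has_real_derivative c * deriv f (c * x + d)) (at x)"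
proof -
  have "((\<lambda>x. c * x + d) has_real_derivative c) (at x)"
    by (auto intro!: derivative_eq_intros)
  from DERIV_chain2[OF differentiable_on_UNIV_DERIV[OF assms] this] show ?thesis
    by (simp add: mult.commute)
qed

lemma smooth_upto_affine: "smooth_upto n f \<Longrightarrow> smooth_upto n (\<lambda>x. f (c * x + d))"
proof (induction n arbitrary: f)
  case 0
  then show ?case
    unfolding smooth_upto_0 by (rule DERIV_imp_differentiable_on_UNIV[OF DERIV_compose_affine])
next
  case (Suc n)
  then have f: "f differentiable_on UNIV" "smooth_upto n (deriv f)"
    by (auto simp: smooth_upto_Suc)
  then have "deriv (\<lambda>x. f (c * x + d)) = (\<lambda>x. c * deriv f (c * x + d))"
    by (intro ext DERIV_imp_deriv DERIV_compose_affine)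
  with f show ?case
    by (simp add: smooth_upto_Suc DERIV_imp_differentiable_on_UNIV[OF DERIV_compose_affine]
        smooth_upto_mult smooth_upto_const Suc.IH)
qed

lemma smooth_upto_inverse:
  "smooth_upto n g \<Longrightarrow> (\<And>x. g x \<noteq> 0) \<Longrightarrow> smooth_upto n (\<lambda>x. inverse (g x))"
proof (induction n arbitrary: g)
  case 0
  then show ?case by (simp add: smooth_upto_0 differentiable_on_inverse)
next
  case (Suc n)
  then have g: "g differentiable_on UNIV" "smooth_upto n g" "smooth_upto n (deriv g)"
    using smooth_upto_Suc_imp by (auto simp: smooth_upto_Suc)
  define g' where "g' x = - deriv g x * (inverse (g x) * inverse (g x))" for x
  have D: "((\<lambda>x. inverse (g x)) has_real_derivative g' x) (at x)" for x
    using DERIV_inverse_fun[OF differentiable_on_UNIV_DERIV[OF g(1)], of x] Suc.prems(2)[of x]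
    by (simp add: g'_def power2_eq_square field_simps)
  have "smooth_upto n (\<lambda>x. - deriv g x)"
    using smooth_upto_mult[OF smooth_upto_const[of n "-1"] g(3)] by simp
  then have "smooth_upto n g'"
    unfolding g'_def by (intro smooth_upto_mult Suc.IH g(2) Suc.prems(2))
  moreover have "deriv (\<lambda>x. inverse (g x)) = g'"
    by (intro ext DERIV_imp_deriv D)
  ultimately show ?case
    by (simp add: smooth_upto_Suc DERIV_imp_differentiable_on_UNIV[OF D])
qed

lemma smooth_funI: "(\<And>n. smooth_upto n f) \<Longrightarrow> smooth_fun f"
  unfolding smooth_fun_def smooth_upto_def by auto

definition flat_exp :: "real \<Rightarrow> real" where
  "flat_exp x = (if 0 < x then exp (- inverse x) else 0)"

text \<open>The derivative of \<open>p(1/x) exp(-1/x)\<close> is \<open>q(1/x) exp(-1/x)\<close> with \<open>q(y) = y\<^sup>2 (p(y) - p'(y))\<close>.\<close>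
primrec flat_exp_poly :: "nat \<Rightarrow> real poly" where
  "flat_exp_poly 0 = 1"
| "flat_exp_poly (Suc n) = [:0, 0, 1:] * (flat_exp_poly n - pderiv (flat_exp_poly n))"

definition flat_exp_deriv :: "nat \<Rightarrow> real \<Rightarrow> real" where
  "flat_exp_deriv n x =
     (if 0 < x then poly (flat_exp_poly n) (inverse x) * exp (- inverse x) else 0)"

lemma tendsto_poly_times_exp_neg_at_top:
  fixes p :: "real poly"
  shows "((\<lambda>z. poly p z * exp (- z)) \<longlongrightarrow> 0) at_top"
proof -
  have "((\<lambda>z. \<Sum>i\<le>Polynomial.degree p. coeff p i * (z ^ i / exp z)) \<longlongrightarrow> (\<Sum>i\<le>Polynomial.degree p. coeff p i * 0)) at_top"
    by (intro tendsto_sum tendsto_mult tendsto_const tendsto_power_div_exp_0)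
  moreover have "(\<Sum>i\<le>Polynomial.degree p. coeff p i * (z ^ i / exp z)) = poly p z * exp (- z)" for z
    by (simp add: poly_altdef sum_distrib_right exp_minus divide_inverse mult.assoc)
  ultimately show ?thesis by simp
qed

lemma flat_exp_deriv_DERIV_pos:
  assumes "0 < x"
  shows "(flat_exp_deriv n has_real_derivative flat_exp_deriv (Suc n) x) (at x)"
proof -
  let ?p = "flat_exp_poly n"
  have "((\<lambda>y. poly ?p (inverse y) * exp (- inverse y)) has_real_derivative
      poly (pderiv ?p) (inverse x) * (- (inverse x ^ 2)) * exp (- inverse x)
       + poly ?p (inverse x) * (exp (- inverse x) * (inverse x ^ 2))) (at x)"
    using assms
    by (auto intro!: derivative_eq_intros DERIV_chain2[OF poly_DERIV] simp: power2_eq_square)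
  also have "poly (pderiv ?p) (inverse x) * (- (inverse x ^ 2)) * exp (- inverse x)
       + poly ?p (inverse x) * (exp (- inverse x) * (inverse x ^ 2)) = flat_exp_deriv (Suc n) x"
    using assms by (simp add: flat_exp_deriv_def algebra_simps power2_eq_square)
  finally show ?thesis
    by (rule has_field_derivative_transform_within_open[of _ _ _ "{0<..}"])
       (use assms in \<open>auto simp: flat_exp_deriv_def\<close>)
qed

lemma flat_exp_deriv_DERIV_neg:
  assumes "x < 0"
  shows "(flat_exp_deriv n has_real_derivative flat_exp_deriv (Suc n) x) (at x)"
proof -
  have "((\<lambda>y. 0) has_real_derivative flat_exp_deriv (Suc n) x) (at x)"
    using assms by (simp add: flat_exp_deriv_def)
  then show ?thesis
    by (rule has_field_derivative_transform_within_open[of _ _ _ "{..<0}"])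
       (use assms in \<open>auto simp: flat_exp_deriv_def\<close>)
qed

lemma flat_exp_deriv_DERIV_0:
  "(flat_exp_deriv n has_real_derivative flat_exp_deriv (Suc n) 0) (at 0)"
proof -
  let ?q = "\<lambda>y. (flat_exp_deriv n y - flat_exp_deriv n 0) / (y - 0)"
  have "(?q \<longlongrightarrow> 0) (at_left 0)"
  proof (rule Lim_transform_eventually[OF tendsto_const])
    show "\<forall>\<^sub>F y in at_left 0. 0 = ?q y"
      unfolding eventually_at_left_field by (rule exI[of _ "-1"]) (auto simp: flat_exp_deriv_def)
  qed
  moreover have "(?q \<longlongrightarrow> 0) (at_right 0)"
  proof (rule Lim_transform_eventually)
    show "((\<lambda>y. poly (pCons 0 (flat_exp_poly n)) (inverse y) * exp (- inverse y)) \<longlongrightarrow> 0) (at_right 0)"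
      using filterlim_compose[OF tendsto_poly_times_exp_neg_at_top[of "pCons 0 (flat_exp_poly n)"]
            filterlim_inverse_at_top_right]
      by simp
    show "\<forall>\<^sub>F y in at_right 0.
        poly (pCons 0 (flat_exp_poly n)) (inverse y) * exp (- inverse y) = ?q y"
      unfolding eventually_at_right_field
      by (rule exI[of _ 1]) (auto simp: flat_exp_deriv_def field_simps)
  qed
  ultimately have "(?q \<longlongrightarrow> 0) (at 0)"
    by (simp add: filterlim_at_split)
  then show ?thesis
    by (simp add: has_field_derivative_iff flat_exp_deriv_def)
qed

lemma flat_exp_deriv_DERIV:
  "(flat_exp_deriv n has_real_derivative flat_exp_deriv (Suc n) x) (at x)"
  using flat_exp_deriv_DERIV_pos flat_exp_deriv_DERIV_neg flat_exp_deriv_DERIV_0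
  by (cases x "0::real" rule: linorder_cases) auto

lemma higher_deriv_flat_exp: "(deriv ^^ n) flat_exp = flat_exp_deriv n"
proof (induction n)
  case 0
  show ?case by (auto simp: flat_exp_deriv_def flat_exp_def)
next
  case (Suc n)
  then show ?case by (auto intro!: ext DERIV_imp_deriv flat_exp_deriv_DERIV)
qed

lemma smooth_upto_flat_exp: "smooth_upto n flat_exp"
  unfolding smooth_upto_def higher_deriv_flat_exp
  by (auto intro!: DERIV_imp_differentiable_on_UNIV flat_exp_deriv_DERIV)

definition smooth_step :: "real \<Rightarrow> real" where
  "smooth_step x = flat_exp x * inverse (flat_exp x + flat_exp (1 - x))"

lemma flat_exp_sum_pos: "0 < flat_exp x + flat_exp (1 - x)"
  by (cases "0 < x") (auto simp: flat_exp_def intro: add_pos_pos)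

lemma smooth_upto_smooth_step: "smooth_upto n smooth_step"
proof -
  have "smooth_upto n (\<lambda>x. flat_exp (1 - x))"
    using smooth_upto_affine[OF smooth_upto_flat_exp, of n "-1" 1] by simp
  then show ?thesis
    unfolding smooth_step_def
    by (intro smooth_upto_mult smooth_upto_inverse smooth_upto_add smooth_upto_flat_exp)
       (simp_all add: flat_exp_sum_pos[THEN less_imp_neq, symmetric])
qed

lemma smooth_step_eq_0: "x \<le> 0 \<Longrightarrow> smooth_step x = 0"
  by (simp add: smooth_step_def flat_exp_def)

lemma smooth_step_eq_1: "1 \<le> x \<Longrightarrow> smooth_step x = 1"
  by (simp add: smooth_step_def flat_exp_def)

lemma smooth_step_bounds: "0 \<le> smooth_step x" "smooth_step x \<le> 1"
  using flat_exp_sum_pos[of x]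
  by (auto simp: smooth_step_def flat_exp_def field_simps)

lemma DERIV_smooth_step: "(smooth_step has_real_derivative deriv smooth_step x) (at x)"
  using smooth_upto_smooth_step[of 0]
  by (simp add: smooth_upto_0 differentiable_on_UNIV_DERIV)

lemma continuous_deriv_smooth_step: "continuous_on UNIV (deriv smooth_step)"
  using smooth_upto_smooth_step[of 1]
  by (simp add: smooth_upto_Suc smooth_upto_0 differentiable_imp_continuous_on)

lemma deriv_smooth_step_eq_0:
  assumes "x \<le> 0 \<or> 1 \<le> x"
  shows "deriv smooth_step x = 0"
  using assms
proof
  assume "x \<le> 0"
  then show ?thesis
    using smooth_step_eq_0 smooth_step_bounds
    by (intro DERIV_local_min[OF DERIV_smooth_step, of 1]) auto
next
  assume "1 \<le> x"
  then show ?thesis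
    using smooth_step_eq_1 smooth_step_bounds
    by (intro DERIV_local_max[OF DERIV_smooth_step, of 1]) auto
qed

lemma bounded_deriv_smooth_step: "\<exists>M>0. \<forall>y. \<bar>deriv smooth_step y\<bar> \<le> M"
proof -
  have "compact (deriv smooth_step ` {0..1})"
    by (rule compact_continuous_image[OF continuous_on_subset[OF continuous_deriv_smooth_step]]) auto
  then obtain B where B: "\<forall>z\<in>deriv smooth_step ` {0..1}. norm z \<le> B"
    using compact_imp_bounded bounded_iff by metis
  have "\<bar>deriv smooth_step y\<bar> \<le> max B 1" for y
    using B deriv_smooth_step_eq_0[of y] by (cases "y \<in> {0..1}") force+
  then show ?thesis by (intro exI[of _ "max B 1"]) auto
qed

definition plateau :: "real \<Rightarrow> real \<Rightarrow> real \<Rightarrow> real \<Rightarrow> real" where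
  "plateau s t \<delta> x = smooth_step ((x - s) / \<delta>) * smooth_step ((t - x) / \<delta>)"

definition step_kernel :: "real \<Rightarrow> real \<Rightarrow> real" where
  "step_kernel \<delta> x = deriv smooth_step (x / \<delta>) / \<delta>"

lemma plateau_eq_0: "\<delta> > 0 \<Longrightarrow> x \<notin> {s<..<t} \<Longrightarrow> plateau s t \<delta> x = 0"
  by (cases "x \<le> s")
     (auto simp: plateau_def smooth_step_eq_0 divide_nonpos_pos)

lemma plateau_eq_1: "\<delta> > 0 \<Longrightarrow> s + \<delta> \<le> x \<Longrightarrow> x + \<delta> \<le> t \<Longrightarrow> plateau s t \<delta> x = 1"
  by (simp add: plateau_def smooth_step_eq_1 le_divide_eq)

lemma plateau_bounds: "0 \<le> plateau s t \<delta> x" "plateau s t \<delta> x \<le> 1"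
  unfolding plateau_def using smooth_step_bounds by (simp_all add: mult_le_one)

lemma DERIV_plateau:
  assumes "\<delta> \<noteq> 0"
  shows "(plateau s t \<delta> has_real_derivative
      step_kernel \<delta> (x - s) * smooth_step ((t - x) / \<delta>)
      - step_kernel \<delta> (t - x) * smooth_step ((x - s) / \<delta>)) (at x)"
proof -
  have "((\<lambda>x. (x - s) / \<delta>) has_real_derivative 1 / \<delta>) (at x)"
    "((\<lambda>x. (t - x) / \<delta>) has_real_derivative - 1 / \<delta>) (at x)"
    using assms by (auto intro!: derivative_eq_intros)
  from DERIV_mult[OF DERIV_chain2[OF DERIV_smooth_step this(1)] DERIV_chain2[OF DERIV_smooth_step this(2)]]
  show ?thesis
    unfolding plateau_def step_kernel_def by (simp add: algebra_simps)
qed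

lemma continuous_plateau:
  assumes "\<delta> \<noteq> 0"
  shows "continuous_on UNIV (plateau s t \<delta>)"
  using DERIV_isCont[OF DERIV_plateau[OF assms]] by (intro continuous_at_imp_continuous_on) blast

text \<open>On the support of each kernel term the other smooth step equals \<open>1\<close>.\<close>
lemma deriv_plateau:
  assumes "\<delta> > 0" "2 * \<delta> < t - s"
  shows "deriv (plateau s t \<delta>) x = step_kernel \<delta> (x - s) - step_kernel \<delta> (t - x)"
proof (rule DERIV_imp_deriv)
  have k1: "step_kernel \<delta> (x - s) * smooth_step ((t - x) / \<delta>) = step_kernel \<delta> (x - s)"
  proof (cases "x \<le> s + \<delta>")
    case True
    then show ?thesis using assms by (simp add: smooth_step_eq_1 le_divide_eq)
  next
    case False
    then show ?thesis using assms by (simp add: step_kernel_def deriv_smooth_step_eq_0 le_divide_eq)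
  qed
  have k2: "step_kernel \<delta> (t - x) * smooth_step ((x - s) / \<delta>) = step_kernel \<delta> (t - x)"
  proof (cases "t - \<delta> \<le> x")
    case True
    then show ?thesis using assms by (simp add: smooth_step_eq_1 le_divide_eq)
  next
    case False
    then show ?thesis using assms by (simp add: step_kernel_def deriv_smooth_step_eq_0 le_divide_eq)
  qed
  show "(plateau s t \<delta> has_real_derivative
      step_kernel \<delta> (x - s) - step_kernel \<delta> (t - x)) (at x)"
    using DERIV_plateau[of \<delta> s t x] assms unfolding k1 k2 by simp
qed

lemma test_fun_plateau:
  assumes "\<delta> > 0" "a < s" "t < b"
  shows "test_fun (plateau s t \<delta>) a b"
proof -
  have sub: "{x. plateau s t \<delta> x \<noteq> 0} \<subseteq> {s..t}"
  proof
    fix x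
    assume "x \<in> {x. plateau s t \<delta> x \<noteq> 0}"
    then have "x \<in> {s<..<t}" using plateau_eq_0[OF assms(1), of x s t] by blast
    then show "x \<in> {s..t}" by simp
  qed
  then have "closure {x. plateau s t \<delta> x \<noteq> 0} \<subseteq> {s..t}"
    by (rule closure_minimal) simp
  moreover have "compact (closure {x. plateau s t \<delta> x \<noteq> 0})"
    using bounded_subset[OF bounded_closed_interval sub] by (simp add: compact_closure)
  moreover have "smooth_fun (plateau s t \<delta>)"
  proof (rule smooth_funI)
    have "plateau s t \<delta> =
        (\<lambda>x. smooth_step (inverse \<delta> * x + - (s / \<delta>)) * smooth_step (- inverse \<delta> * x + t / \<delta>))"
      by (rule ext) (simp add: plateau_def divide_inverse algebra_simps)
    then show "smooth_upto n (plateau s t \<delta>)" for n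
      by (simp only:) (intro smooth_upto_mult smooth_upto_affine smooth_upto_smooth_step)
  qed
  ultimately show ?thesis
    unfolding test_fun_def using assms by auto
qed

lemma continuous_step_kernel: "continuous_on UNIV (step_kernel \<delta>)"
  unfolding step_kernel_def[abs_def] divide_inverse
  by (intro continuous_on_mult_right continuous_on_compose2[OF continuous_deriv_smooth_step])
     (auto intro!: continuous_intros)

lemma step_kernel_eq_0: "\<delta> > 0 \<Longrightarrow> x \<notin> {0..\<delta>} \<Longrightarrow> step_kernel \<delta> x = 0"
  by (auto simp: step_kernel_def deriv_smooth_step_eq_0 divide_nonpos_pos le_divide_eq)

lemma has_integral_step_kernel:
  assumes "\<delta> > 0"
  shows "((\<lambda>x. step_kernel \<delta> (x - c)) has_integral 1) {c..c + \<delta>}"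
    and "((\<lambda>x. step_kernel \<delta> (c - x)) has_integral 1) {c - \<delta>..c}"
proof -
  have "((\<lambda>x. (x - c) / \<delta>) has_real_derivative 1 / \<delta>) (at x)"
    "((\<lambda>x. (c - x) / \<delta>) has_real_derivative - 1 / \<delta>) (at x)" for x
    using assms by (auto intro!: derivative_eq_intros)
  from DERIV_chain2[OF DERIV_smooth_step this(1)] DERIV_minus[OF DERIV_chain2[OF DERIV_smooth_step this(2)]]
  have "((\<lambda>x. smooth_step ((x - c) / \<delta>)) has_vector_derivative step_kernel \<delta> (x - c))
      (at x within S)"
    "((\<lambda>x. - smooth_step ((c - x) / \<delta>)) has_vector_derivative step_kernel \<delta> (c - x))
      (at x within S)"
    for x S
    by (auto simp: step_kernel_def has_real_derivative_iff_has_vector_derivative[symmetric]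
        intro: has_field_derivative_at_within)
  from fundamental_theorem_of_calculus[OF _ this(1), where a = c and b = "c + \<delta>"]
    fundamental_theorem_of_calculus[OF _ this(2), where a = "c - \<delta>" and b = c]
  show "((\<lambda>x. step_kernel \<delta> (x - c)) has_integral 1) {c..c + \<delta>}"
    "((\<lambda>x. step_kernel \<delta> (c - x)) has_integral 1) {c - \<delta>..c}"
    using assms by (simp_all add: smooth_step_eq_0 smooth_step_eq_1)
qed

section \<open>Weak derivatives of continuous functions are antiderivatives\<close>

lemma integral_mult_kernel_estimate:
  fixes f \<rho> :: "real \<Rightarrow> real"
  assumes f: "continuous_on {a..b} f" and \<rho>: "continuous_on UNIV \<rho>"
    and cd: "a \<le> c" "c \<le> d" "d \<le> b"
    and supp: "\<And>x. x \<notin> {c..d} \<Longrightarrow> \<rho> x = 0" and K: "\<And>x. \<bar>\<rho> x\<bar> \<le> K"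
    and I: "integral {c..d} \<rho> = 1" and e: "\<And>x. x \<in> {c..d} \<Longrightarrow> \<bar>f x - y\<bar> \<le> e"
  shows "\<bar>integral {a..b} (\<lambda>x. f x * \<rho> x) - y\<bar> \<le> e * K * (d - c)"
proof -
  have fcd: "continuous_on {c..d} f" and \<rho>cd: "continuous_on {c..d} \<rho>"
    using continuous_on_subset[OF f] continuous_on_subset[OF \<rho>] cd by auto
  have "integral {a..b} (\<lambda>x. f x * \<rho> x) = integral {a..b} (\<lambda>x. if x \<in> {c..d} then f x * \<rho> x else 0)"
    by (rule integral_cong) (use supp in auto)
  also have "\<dots> = integral ({c..d} \<inter> {a..b}) (\<lambda>x. f x * \<rho> x)"
    by (rule integral_restrict_Int)
  also have "\<dots> = integral {c..d} (\<lambda>x. f x * \<rho> x)"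
    using cd by (simp add: Int_absorb2)
  also have "\<dots> = integral {c..d} (\<lambda>x. (f x - y) * \<rho> x) + y * integral {c..d} \<rho>"
    using fcd \<rho>cd
    by (simp add: left_diff_distrib integral_diff integrable_continuous_interval continuous_intros)
  finally have "integral {a..b} (\<lambda>x. f x * \<rho> x) - y = integral {c..d} (\<lambda>x. (f x - y) * \<rho> x)"
    using I by simp
  also have "\<bar>\<dots>\<bar> \<le> integral {c..d} (\<lambda>x. e * K)"
  proof -
    have "norm (integral {c..d} (\<lambda>x. (f x - y) * \<rho> x)) \<le> integral {c..d} (\<lambda>x. e * K)"
      using fcd \<rho>cd e K
      by (intro integral_norm_bound_integral)
         (auto simp: abs_mult integrable_continuous_interval continuous_intros intro!: mult_mono')
    then show ?thesis
      by simp
  qed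
  also have "\<dots> = e * K * (d - c)"
    using cd by simp
  finally show ?thesis .
qed

lemma tendsto_integral_mult_kernel:
  fixes f :: "real \<Rightarrow> real" and \<rho> :: "nat \<Rightarrow> real \<Rightarrow> real"
  assumes f: "continuous_on {a..b} f" and p: "p \<in> {a..b}"
    and cd: "\<And>n. a \<le> c n" "\<And>n. c n < d n" "\<And>n. d n \<le> b" "\<And>n. p \<in> {c n..d n}"
    and shrink: "(\<lambda>n. d n - c n) \<longlonglongrightarrow> 0"
    and \<rho>: "\<And>n. continuous_on UNIV (\<rho> n)"
    and supp: "\<And>n x. x \<notin> {c n..d n} \<Longrightarrow> \<rho> n x = 0"
    and M: "M > 0" "\<And>n x. \<bar>\<rho> n x\<bar> * (d n - c n) \<le> M"
    and I: "\<And>n. integral {c n..d n} (\<rho> n) = 1"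
  shows "(\<lambda>n. integral {a..b} (\<lambda>x. f x * \<rho> n x)) \<longlonglongrightarrow> f p"
proof (rule LIMSEQ_I)
  fix r :: real
  assume "0 < r"
  then have "r / (2 * M) > 0"
    using M by simp
  then obtain \<eta> where "\<eta> > 0" and \<eta>: "\<And>x. x \<in> {a..b} \<Longrightarrow> dist x p < \<eta> \<Longrightarrow> \<bar>f x - f p\<bar> < r / (2 * M)"
    using f p unfolding continuous_on_iff dist_real_def by blast
  obtain N where N: "\<And>n. n \<ge> N \<Longrightarrow> d n - c n < \<eta>"
    using LIMSEQ_D[OF shrink \<open>\<eta> > 0\<close>] cd(2) by fastforce
  have "\<bar>integral {a..b} (\<lambda>x. f x * \<rho> n x) - f p\<bar> < r" if "n \<ge> N" for n
  proof -
    have "\<bar>f x - f p\<bar> \<le> r / (2 * M)" if "x \<in> {c n..d n}" for x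
    proof (rule less_imp_le, rule \<eta>)
      show "x \<in> {a..b}" "dist x p < \<eta>"
        using N[OF \<open>n \<ge> N\<close>] that cd[of n] by (auto simp: dist_real_def abs_if)
    qed
    moreover have "\<bar>\<rho> n x\<bar> \<le> M / (d n - c n)" for x
      using M(2)[of n x] cd(2)[of n] by (simp add: field_simps)
    ultimately have "\<bar>integral {a..b} (\<lambda>x. f x * \<rho> n x) - f p\<bar>
        \<le> r / (2 * M) * (M / (d n - c n)) * (d n - c n)"
      using cd[of n] by (intro integral_mult_kernel_estimate[OF f \<rho> _ _ _ supp _ I]) auto
    also have "\<dots> = r / 2"
      using cd(2)[of n] M(1) by (simp add: field_simps)
    also have "\<dots> < r"
      using \<open>0 < r\<close> by simp
    finally show ?thesis .
  qed
  then show "\<exists>N. \<forall>n\<ge>N. norm (integral {a..b} (\<lambda>x. f x * \<rho> n x) - f p) < r"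
    by auto
qed

lemma set_lebesgue_integral_Ioo_eq_integral:
  fixes f :: "real \<Rightarrow> real"
  assumes "continuous_on {a..b} f"
  shows "(LINT x:{a<..<b}|lebesgue. f x) = integral {a..b} f"
proof -
  have "set_integrable lebesgue {a<..<b} f"
    by (rule set_integrable_subset[OF absolutely_integrable_continuous_real[OF assms]]) auto
  then show ?thesis
    by (simp add: set_lebesgue_integral_eq_integral(2) integral_open_interval_real)
qed

lemma set_integral_mult_deriv_plateau:
  fixes f :: "real \<Rightarrow> real"
  assumes f: "continuous_on {a..b} f" and \<delta>: "0 < \<delta>" "2 * \<delta> < t - s"
  shows "(LINT x:{a<..<b}|lebesgue. f x * deriv (plateau s t \<delta>) x)
      = integral {a..b} (\<lambda>x. f x * step_kernel \<delta> (x - s))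
        - integral {a..b} (\<lambda>x. f x * step_kernel \<delta> (t - x))"
proof -
  have "continuous_on {a..b} (\<lambda>x. step_kernel \<delta> (x - s))"
    "continuous_on {a..b} (\<lambda>x. step_kernel \<delta> (t - x))"
    by (rule continuous_on_compose2[OF continuous_step_kernel]; auto intro!: continuous_intros)+
  then have cont: "continuous_on {a..b} (\<lambda>x. f x * step_kernel \<delta> (x - s))"
    "continuous_on {a..b} (\<lambda>x. f x * step_kernel \<delta> (t - x))"
    using f by (auto intro: continuous_on_mult)
  then have "(LINT x:{a<..<b}|lebesgue. f x * deriv (plateau s t \<delta>) x)
      = integral {a..b} (\<lambda>x. f x * step_kernel \<delta> (x - s) - f x * step_kernel \<delta> (t - x))"
    by (simp add: deriv_plateau[OF \<delta>] right_diff_distrib continuous_on_diff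
        set_lebesgue_integral_Ioo_eq_integral)
  also have "\<dots> = integral {a..b} (\<lambda>x. f x * step_kernel \<delta> (x - s))
      - integral {a..b} (\<lambda>x. f x * step_kernel \<delta> (t - x))"
    using cont by (intro integral_diff integrable_continuous_interval)
  finally show ?thesis .
qed

lemma tendsto_integral_mult_deriv_plateau:
  fixes f :: "real \<Rightarrow> real" and \<delta> :: "nat \<Rightarrow> real"
  assumes st: "a < s" "s < t" "t < b" and f: "continuous_on {a..b} f"
    and \<delta>: "\<And>n. 0 < \<delta> n" "\<And>n. 2 * \<delta> n < t - s" "\<delta> \<longlonglongrightarrow> 0"
  shows "(\<lambda>n. LINT x:{a<..<b}|lebesgue. f x * deriv (plateau s t (\<delta> n)) x) \<longlonglongrightarrow> f s - f t"
proof -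
  obtain M where M: "M > 0" "\<And>y. \<bar>deriv smooth_step y\<bar> \<le> M"
    using bounded_deriv_smooth_step by blast
  have kernel_bound: "\<bar>step_kernel (\<delta> n) y\<bar> * \<delta> n \<le> M" for n y
    using M(2)[of "y / \<delta> n"] \<delta>(1)[of n] by (simp add: step_kernel_def abs_divide)
  have \<delta>_small: "0 \<le> \<delta> n" "s + \<delta> n \<le> b" "a \<le> t - \<delta> n" for n
    using st \<delta>(1,2)[of n] by auto
  have cont: "continuous_on UNIV (\<lambda>x. step_kernel (\<delta> n) (x - s))"
    "continuous_on UNIV (\<lambda>x. step_kernel (\<delta> n) (t - x))" for n
    by (rule continuous_on_compose2[OF continuous_step_kernel]; auto intro!: continuous_intros)+
  have "(\<lambda>n. integral {a..b} (\<lambda>x. f x * step_kernel (\<delta> n) (x - s))) \<longlonglongrightarrow> f s"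
  proof (rule tendsto_integral_mult_kernel[where c = "\<lambda>n. s" and d = "\<lambda>n. s + \<delta> n", OF f])
    show "step_kernel (\<delta> n) (x - s) = 0" if "x \<notin> {s..s + \<delta> n}" for n x
      by (rule step_kernel_eq_0[OF \<delta>(1)]) (use that in auto)
    show "integral {s..s + \<delta> n} (\<lambda>x. step_kernel (\<delta> n) (x - s)) = 1" for n
      using has_integral_step_kernel(1)[OF \<delta>(1)] by blast
  qed (use st \<delta> \<delta>_small M kernel_bound cont in \<open>auto simp: algebra_simps\<close>)
  moreover have "(\<lambda>n. integral {a..b} (\<lambda>x. f x * step_kernel (\<delta> n) (t - x))) \<longlonglongrightarrow> f t"
  proof (rule tendsto_integral_mult_kernel[where c = "\<lambda>n. t - \<delta> n" and d = "\<lambda>n. t", OF f])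
    show "step_kernel (\<delta> n) (t - x) = 0" if "x \<notin> {t - \<delta> n..t}" for n x
      by (rule step_kernel_eq_0[OF \<delta>(1)]) (use that in auto)
    show "integral {t - \<delta> n..t} (\<lambda>x. step_kernel (\<delta> n) (t - x)) = 1" for n
      using has_integral_step_kernel(2)[OF \<delta>(1)] by blast
  qed (use st \<delta> \<delta>_small M kernel_bound cont in \<open>auto simp: algebra_simps\<close>)
  moreover have "(LINT x:{a<..<b}|lebesgue. f x * deriv (plateau s t (\<delta> n)) x)
      = integral {a..b} (\<lambda>x. f x * step_kernel (\<delta> n) (x - s))
        - integral {a..b} (\<lambda>x. f x * step_kernel (\<delta> n) (t - x))" for n
    by (rule set_integral_mult_deriv_plateau[OF f \<delta>(1,2)])
  ultimately show ?thesis
    by (simp add: tendsto_diff)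
qed

lemma tendsto_integral_mult_plateau:
  fixes g :: "real \<Rightarrow> real" and \<delta> :: "nat \<Rightarrow> real"
  assumes st: "a < s" "t < b" and g: "set_integrable lebesgue {a<..<b} g"
    and \<delta>: "\<And>n. 0 < \<delta> n" "\<delta> \<longlonglongrightarrow> 0"
  shows "(\<lambda>n. LINT x:{a<..<b}|lebesgue. g x * plateau s t (\<delta> n) x) \<longlonglongrightarrow> (LINT x:{s<..<t}|lebesgue. g x)"
  unfolding set_lebesgue_integral_def
proof (rule integral_dominated_convergence[where w = "\<lambda>x. norm (indicator {a<..<b} x *\<^sub>R g x)"])
  have gm: "(\<lambda>x. indicator {a<..<b} x *\<^sub>R g x) \<in> borel_measurable lebesgue"
    using g unfolding set_integrable_def by blast
  have "(\<lambda>x. indicator {s<..<t} x *\<^sub>R (indicator {a<..<b} x *\<^sub>R g x)) \<in> borel_measurable lebesgue"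
    by (rule borel_measurable_scaleR[OF borel_measurable_indicator gm]) simp
  moreover have "(\<lambda>x. indicator {s<..<t} x *\<^sub>R (indicator {a<..<b} x *\<^sub>R g x))
      = (\<lambda>x. indicator {s<..<t} x *\<^sub>R g x)"
    using st by (auto simp: indicator_def)
  ultimately show "(\<lambda>x. indicator {s<..<t} x *\<^sub>R g x) \<in> borel_measurable lebesgue"
    by (simp only:)
  show "(\<lambda>x. indicator {a<..<b} x *\<^sub>R (g x * plateau s t (\<delta> n) x)) \<in> borel_measurable lebesgue" for n
  proof -
    have "plateau s t (\<delta> n) \<in> borel_measurable lebesgue"
      using continuous_plateau[of "\<delta> n" s t] \<delta>(1)[of n]
      by (simp add: borel_measurable_continuous_onI measurable_completion)
    with gm show ?thesis
      by (simp add: mult.assoc[symmetric] borel_measurable_times)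
  qed
  show "integrable lebesgue (\<lambda>x. norm (indicator {a<..<b} x *\<^sub>R g x))"
    using g unfolding set_integrable_def by (rule integrable_norm)
  show "AE x in lebesgue. norm (indicator {a<..<b} x *\<^sub>R (g x * plateau s t (\<delta> n) x))
      \<le> norm (indicator {a<..<b} x *\<^sub>R g x)" for n
    using plateau_bounds[of s t "\<delta> n"]
    by (intro AE_I2) (auto simp: abs_mult indicator_def intro!: mult_left_le)
  show "AE x in lebesgue. (\<lambda>n. indicator {a<..<b} x *\<^sub>R (g x * plateau s t (\<delta> n) x))
      \<longlonglongrightarrow> indicator {s<..<t} x *\<^sub>R g x"
  proof (intro AE_I2)
    fix x
    show "(\<lambda>n. indicator {a<..<b} x *\<^sub>R (g x * plateau s t (\<delta> n) x)) \<longlonglongrightarrow> indicator {s<..<t} x *\<^sub>R g x"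
    proof (cases "x \<in> {s<..<t}")
      case True
      then have "eventually (\<lambda>n. \<delta> n < min (x - s) (t - x)) sequentially"
        by (intro order_tendstoD(2)[OF \<delta>(2)]) auto
      then have "eventually (\<lambda>n. indicator {a<..<b} x *\<^sub>R (g x * plateau s t (\<delta> n) x)
          = indicator {s<..<t} x *\<^sub>R g x) sequentially"
        by eventually_elim (use True st \<delta>(1) in \<open>auto simp: plateau_eq_1 indicator_def\<close>)
      then show ?thesis
        by (rule tendsto_eventually)
    next
      case False
      then show ?thesis
        using \<delta>(1) by (simp add: plateau_eq_0)
    qed
  qed
qed

lemma weak_deriv_on_imp_fundamental_theorem:
  fixes f g :: "real \<Rightarrow> real"
  assumes st: "a < s" "s < t" "t < b"
    and f: "continuous_on {a..b} f" and g: "set_integrable lebesgue {a<..<b} g"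
    and weak: "weak_deriv_on f g a b"
  shows "f t - f s = (LINT x:{s<..<t}|lebesgue. g x)"
proof -
  define \<delta> where "\<delta> n = (t - s) / 3 * inverse (Suc n)" for n
  have \<delta>_le: "\<delta> n \<le> (t - s) / 3" for n
    using st by (auto simp: \<delta>_def inverse_le_1_iff intro: mult_left_le)
  have \<delta>: "0 < \<delta> n" "2 * \<delta> n < t - s" for n
  proof -
    show "0 < \<delta> n"
      using st by (simp add: \<delta>_def)
    show "2 * \<delta> n < t - s"
      using st \<delta>_le[of n] by (simp add: field_simps)
  qed
  have "\<delta> \<longlonglongrightarrow> 0"
    unfolding \<delta>_def by (rule tendsto_mult_right_zero[OF LIMSEQ_inverse_real_of_nat])
  have "(\<lambda>n. LINT x:{a<..<b}|lebesgue. f x * deriv (plateau s t (\<delta> n)) x) \<longlonglongrightarrow> f s - f t"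
    by (rule tendsto_integral_mult_deriv_plateau[OF st f \<delta> \<open>\<delta> \<longlonglongrightarrow> 0\<close>])
  moreover have "(\<lambda>n. LINT x:{a<..<b}|lebesgue. f x * deriv (plateau s t (\<delta> n)) x)
      = (\<lambda>n. - (LINT x:{a<..<b}|lebesgue. g x * plateau s t (\<delta> n) x))"
    using weak test_fun_plateau[OF \<delta>(1) st(1,3)] by (simp add: weak_deriv_on_def)
  ultimately have "(\<lambda>n. LINT x:{a<..<b}|lebesgue. g x * plateau s t (\<delta> n) x) \<longlonglongrightarrow> f t - f s"
    using tendsto_minus by fastforce
  with tendsto_integral_mult_plateau[OF st(1,3) g \<delta>(1) \<open>\<delta> \<longlonglongrightarrow> 0\<close>] show ?thesis
    by (rule LIMSEQ_unique[symmetric])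
qed

section \<open>Weak derivatives vanish almost everywhere at extremal points\<close>

lemma AE_lebesgue_uminus:
  assumes "AE x in lebesgue. P (- x :: real)"
  shows "AE x in lebesgue. P x"
proof -
  obtain N where N: "N \<in> null_sets lebesgue" "{x. \<not> P (- x)} \<subseteq> N"
    using assms unfolding eventually_ae_filter by auto
  have "negligible (uminus ` N)"
    using N(1) unfolding negligible_iff_null_sets[symmetric]
    by (intro negligible_differentiable_image_negligible[OF order_refl])
       (auto intro!: derivative_intros simp: differentiable_on_def)
  moreover have "{x. \<not> P x} \<subseteq> uminus ` N"
  proof
    fix x
    assume "x \<in> {x. \<not> P x}"
    then have "- x \<in> N"
      using N(2) by auto
    then show "x \<in> uminus ` N"
      by (rule rev_image_eqI) simp
  qed
  ultimately show ?thesis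
    by (intro AE_I'[of "uminus ` N"]) (auto simp: negligible_iff_null_sets)
qed

lemma AE_tendsto_integral_right_quotient:
  fixes G :: "real \<Rightarrow> real"
  assumes "\<And>p q. G integrable_on {p..q}"
  shows "AE x in lebesgue. ((\<lambda>h. integral {x..x + h} G / h) \<longlongrightarrow> G x) (at_right 0)"
proof -
  obtain N where "negligible N" and N: "\<And>x e. x \<notin> N \<Longrightarrow> 0 < e \<Longrightarrow>
      \<exists>d>0. \<forall>h. 0 < h \<and> h < d \<longrightarrow> norm (integral (cbox x (x + h *\<^sub>R One)) G /\<^sub>R h ^ DIM(real) - G x) < e"
    using integrable_ccontinuous_explicit[of G] assms by (metis cbox_interval)
  have "((\<lambda>h. integral {x..x + h} G / h) \<longlongrightarrow> G x) (at_right 0)" if "x \<notin> N" for x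
  proof (rule tendstoI)
    fix e :: real
    assume "0 < e"
    with N[OF that] obtain d where "d > 0" and d: "\<forall>h. 0 < h \<and> h < d \<longrightarrow>
        norm (integral (cbox x (x + h *\<^sub>R One)) G /\<^sub>R h ^ DIM(real) - G x) < e"
      by blast
    then show "\<forall>\<^sub>F h in at_right 0. dist (integral {x..x + h} G / h) (G x) < e"
      unfolding eventually_at_right_field dist_real_def
      by (intro exI[of _ d]) (auto simp: divide_inverse mult.commute)
  qed
  then show ?thesis
    using \<open>negligible N\<close> by (intro AE_I'[of N]) (auto simp: negligible_iff_null_sets)
qed

lemma AE_tendsto_integral_left_quotient:
  fixes G :: "real \<Rightarrow> real"
  assumes G: "\<And>p q. G integrable_on {p..q}"
  shows "AE x in lebesgue. ((\<lambda>h. integral {x - h..x} G / h) \<longlongrightarrow> G x) (at_right 0)"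
proof (rule AE_lebesgue_uminus)
  have "(\<lambda>x. G (- x)) integrable_on {p..q}" for p q
    using Henstock_Kurzweil_Integration.integrable_reflect_real[of G "- p" "- q"] G by simp
  moreover have "integral {x..x + h} (\<lambda>y. G (- y)) = integral {- x - h..- x} G" for x h
    using Henstock_Kurzweil_Integration.integral_reflect_real[where a = "- x - h" and b = "- x" and f = G]
    by (simp add: add.commute)
  ultimately show "AE x in lebesgue. ((\<lambda>h. integral {- x - h..- x} G / h) \<longlongrightarrow> G (- x)) (at_right 0)"
    using AE_tendsto_integral_right_quotient[of "\<lambda>x. G (- x)"] by simp
qed

lemma AE_integrand_eq_0_at_minimum:
  fixes f G :: "real \<Rightarrow> real"
  assumes G: "\<And>p q. G integrable_on {p..q}"
    and ftc: "\<And>s t. a < s \<Longrightarrow> s < t \<Longrightarrow> t < b \<Longrightarrow> f t - f s = integral {s..t} G"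
  shows "AE x in lebesgue. x \<in> {a<..<b} \<longrightarrow> (\<forall>y\<in>{a<..<b}. f x \<le> f y) \<longrightarrow> G x = 0"
  using AE_tendsto_integral_right_quotient[OF G] AE_tendsto_integral_left_quotient[OF G]
proof eventually_elim
  case (elim x)
  show ?case
  proof (intro impI)
    assume x: "x \<in> {a<..<b}" and min: "\<forall>y\<in>{a<..<b}. f x \<le> f y"
    have small: "\<forall>\<^sub>F h in at_right 0. 0 < h \<and> x - h \<in> {a<..<b} \<and> x + h \<in> {a<..<b}"
      using x unfolding eventually_at_right_field by (intro exI[of _ "min (b - x) (x - a)"]) auto
    have "\<forall>\<^sub>F h in at_right 0. 0 \<le> integral {x..x + h} G / h"
      using small
    proof eventually_elim
      case (elim h)
      then have "integral {x..x + h} G = f (x + h) - f x"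
        using ftc[of x "x + h"] x by auto
      moreover have "f x \<le> f (x + h)"
        using min elim by blast
      ultimately show ?case
        using elim by simp
    qed
    then have "0 \<le> G x"
      by (rule tendsto_lowerbound[OF elim(1)]) simp
    moreover have "\<forall>\<^sub>F h in at_right 0. integral {x - h..x} G / h \<le> 0"
      using small
    proof eventually_elim
      case (elim h)
      then have "integral {x - h..x} G = f x - f (x - h)"
        using ftc[of "x - h" x] x by auto
      moreover have "f x \<le> f (x - h)"
        using min elim by blast
      ultimately show ?case
        using elim by (simp add: divide_nonpos_pos)
    qed
    then have "G x \<le> 0"
      by (rule tendsto_upperbound[OF elim(2)]) simp
    ultimately show "G x = 0"
      by simp
  qed
qed

lemma AE_integrand_eq_0_at_extremum:
  fixes f G :: "real \<Rightarrow> real"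
  assumes G: "\<And>p q. G integrable_on {p..q}"
    and ftc: "\<And>s t. a < s \<Longrightarrow> s < t \<Longrightarrow> t < b \<Longrightarrow> f t - f s = integral {s..t} G"
  shows "AE x in lebesgue. x \<in> {a<..<b} \<longrightarrow>
    (\<forall>y\<in>{a<..<b}. f x \<le> f y) \<or> (\<forall>y\<in>{a<..<b}. f y \<le> f x) \<longrightarrow> G x = 0"
proof -
  have "AE x in lebesgue. x \<in> {a<..<b} \<longrightarrow> (\<forall>y\<in>{a<..<b}. - f x \<le> - f y) \<longrightarrow> - G x = 0"
  proof (rule AE_integrand_eq_0_at_minimum)
    show "(\<lambda>x. - G x) integrable_on {p..q}" for p q
      using G by (rule integrable_neg)
    show "- f t - - f s = integral {s..t} (\<lambda>x. - G x)" if "a < s" "s < t" "t < b" for s t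
      using ftc[OF that] by simp
  qed
  moreover have "AE x in lebesgue. x \<in> {a<..<b} \<longrightarrow> (\<forall>y\<in>{a<..<b}. f x \<le> f y) \<longrightarrow> G x = 0"
    using G ftc by (rule AE_integrand_eq_0_at_minimum)
  ultimately show ?thesis
    by eventually_elim auto
qed

lemma weak_deriv_on_AE_eq_0_at_extremum:
  fixes f g :: "real \<Rightarrow> real"
  assumes f: "continuous_on {a..b} f" and g: "set_integrable lebesgue {a<..<b} g"
    and weak: "weak_deriv_on f g a b"
  shows "AE x in lebesgue. x \<in> {a<..<b} \<longrightarrow>
    (\<forall>y\<in>{a<..<b}. f x \<le> f y) \<or> (\<forall>y\<in>{a<..<b}. f y \<le> f x) \<longrightarrow> g x = 0"
proof -
  define G where "G x = indicator {a<..<b} x * g x" for x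
  have G_eq: "G = (\<lambda>x. if x \<in> {a<..<b} then g x else 0)"
    by (auto simp: G_def)
  have "G integrable_on UNIV"
    unfolding G_eq integrable_restrict_UNIV by (rule set_lebesgue_integral_eq_integral(1)[OF g])
  then have G: "G integrable_on {p..q}" for p q
    by (rule integrable_on_subinterval) auto
  have ftc: "f t - f s = integral {s..t} G" if st: "a < s" "s < t" "t < b" for s t
  proof -
    have "set_integrable lebesgue {s<..<t} g"
      by (rule set_integrable_subset[OF g]) (use st in auto)
    then have "(LINT x:{s<..<t}|lebesgue. g x) = integral {s<..<t} g"
      by (rule set_lebesgue_integral_eq_integral(2))
    also have "\<dots> = integral {s<..<t} G"
      using st by (intro integral_cong) (simp add: G_def)
    finally have "(LINT x:{s<..<t}|lebesgue. g x) = integral {s<..<t} G" .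
    then show ?thesis
      using weak_deriv_on_imp_fundamental_theorem[OF st f g weak] by (simp add: integral_open_interval_real)
  qed
  have "AE x in lebesgue. x \<in> {a<..<b} \<longrightarrow>
      (\<forall>y\<in>{a<..<b}. f x \<le> f y) \<or> (\<forall>y\<in>{a<..<b}. f y \<le> f x) \<longrightarrow> G x = 0"
    using G ftc by (rule AE_integrand_eq_0_at_extremum)
  then show ?thesis
    by eventually_elim (auto simp: G_def)
qed

lemma AE_on_interval_from_subintervals:
  fixes T :: "real set"
  assumes T: "is_interval T"
    and sub: "\<And>a b. a \<in> T \<Longrightarrow> b \<in> T \<Longrightarrow> a < b \<Longrightarrow> AE x in lebesgue. x \<in> {a<..<b} \<longrightarrow> P x"
  shows "AE x in lebesgue. x \<in> T \<longrightarrow> P x"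
proof -
  define Q where "Q = {(p, q). p \<in> \<rat> \<and> q \<in> \<rat> \<and> p \<in> T \<and> q \<in> T \<and> p < q}"
  have "countable Q"
    by (rule countable_subset[of _ "\<rat> \<times> \<rat>"]) (auto simp: Q_def intro: countable_SIGMA countable_rat)
  then have "AE x in lebesgue. \<forall>(p, q)\<in>Q. x \<in> {p<..<q} \<longrightarrow> P x"
    using sub by (intro AE_ball_countable') (auto simp: Q_def)
  moreover have "AE x in lebesgue. x \<notin> frontier T"
    using negligible_convex_frontier[OF is_interval_convex[OF T]]
    by (intro AE_not_in) (simp add: negligible_iff_null_sets)
  ultimately show ?thesis
  proof eventually_elim
    case (elim x)
    show ?case
    proof
      assume "x \<in> T"
      then have "x \<in> interior T"
        using elim(2) closure_subset[of T] by (auto simp: frontier_def)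
      then obtain e where "e > 0" "ball x e \<subseteq> T"
        by (meson open_contains_ball open_interior interior_subset subset_trans)
      moreover obtain p q where "p \<in> \<rat>" "x - e < p" "p < x" "q \<in> \<rat>" "x < q" "q < x + e"
        using Rats_dense_in_real[of "x - e" x] Rats_dense_in_real[of x "x + e"] \<open>e > 0\<close> by auto
      ultimately have "(p, q) \<in> Q"
        by (auto simp: Q_def dist_real_def subset_iff)
      with elim(1) \<open>p < x\<close> \<open>x < q\<close> show "P x"
        by auto
    qed
  qed
qed

lemma L2_on_imp_set_integrable:
  fixes g :: "real \<Rightarrow> real"
  assumes "L2_on g a b"
  shows "set_integrable lebesgue {a<..<b} g"
proof -
  have gm: "(\<lambda>x. indicator {a<..<b} x * g x) \<in> borel_measurable lebesgue"
    and g2: "integrable lebesgue (\<lambda>x. indicator {a<..<b} x * (g x)\<^sup>2)"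
    using assms by (auto simp: L2_on_def set_integrable_def)
  have "integrable lebesgue (indicator {a<..<b} :: real \<Rightarrow> real)"
    using emeasure_bounded_finite[of "{a<..<b}"] by (intro integrable_real_indicator) auto
  then have "integrable lebesgue (\<lambda>x. indicator {a<..<b} x * g x)"
  proof (rule Bochner_Integration.integrable_bound[OF Bochner_Integration.integrable_add[OF _ g2] gm])
    have "\<bar>y\<bar> \<le> 1 + y\<^sup>2" for y :: real
      using zero_le_power2[of "\<bar>y\<bar> - 1"] by (simp add: power2_eq_square algebra_simps abs_mult_self_eq)
    then show "AE x in lebesgue. norm (indicator {a<..<b} x * g x)
        \<le> norm (indicator {a<..<b} x + indicator {a<..<b} x * (g x)\<^sup>2 :: real)"
      by (intro AE_I2) (auto simp: indicator_def)
  qed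
  then show ?thesis
    by (simp add: set_integrable_def)
qed

lemma weak_deriv_AE_eq_0_on_contact_set:
  fixes u u' :: "real \<Rightarrow> real" and T :: "real set"
  assumes T: "is_interval T" and u: "continuous_on T u" "\<forall>t\<in>T. u t \<in> {0..1}"
    and u': "\<forall>a\<in>T. \<forall>b\<in>T. L2_on u' a b \<and> weak_deriv_on u u' a b"
  shows "AE t in lebesgue. t \<in> T \<longrightarrow> (u t = 0 \<or> u t = 1) \<longrightarrow> u' t = 0"
proof (rule AE_on_interval_from_subintervals[OF T])
  fix a b
  assume ab: "a \<in> T" "b \<in> T" "a < b"
  then have "{a..b} \<subseteq> T"
    using T by (meson atLeastAtMost_iff is_interval_1 subsetI)
  then have extremum: "AE x in lebesgue. x \<in> {a<..<b} \<longrightarrow>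
      (\<forall>y\<in>{a<..<b}. u x \<le> u y) \<or> (\<forall>y\<in>{a<..<b}. u y \<le> u x) \<longrightarrow> u' x = 0"
    using u(1) u' ab
    by (intro weak_deriv_on_AE_eq_0_at_extremum L2_on_imp_set_integrable)
       (auto intro: continuous_on_subset)
  have range: "u y \<in> {0..1}" if "y \<in> {a<..<b}" for y
    using that \<open>{a..b} \<subseteq> T\<close> u(2) by (meson greaterThanLessThan_subseteq_atLeastAtMost_iff order_refl subsetD)
  from extremum show "AE x in lebesgue. x \<in> {a<..<b} \<longrightarrow> (u x = 0 \<or> u x = 1) \<longrightarrow> u' x = 0"
  proof eventually_elim
    case (elim x)
    show ?case
    proof (intro impI)
      assume x: "x \<in> {a<..<b}" and "u x = 0 \<or> u x = 1"
      then have "(\<forall>y\<in>{a<..<b}. u x \<le> u y) \<or> (\<forall>y\<in>{a<..<b}. u y \<le> u x)"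
        using range by force
      with elim x show "u' x = 0"
        by blast
    qed
  qed
qed

theorem theorem5:
  fixes w :: "'v::finite \<Rightarrow> 'v \<Rightarrow> real" and r \<epsilon> :: real and T :: "real set"
    and u u' \<beta> :: "real \<Rightarrow> 'v \<Rightarrow> real"
  assumes "wgraph w" and "0 \<le> r" and "r \<le> 1" and "\<epsilon> > 0"
    and "is_interval T"
    and "H1_loc T u"
    and "\<forall>i. continuous_on T (\<lambda>t. u t i)"
    and "\<forall>t\<in>T. \<forall>i. u t i \<in> {0..1}"
    and "\<forall>i. \<forall>a\<in>T. \<forall>b\<in>T. L2_on (\<lambda>t. u' t i) a b \<and> weak_deriv_on (\<lambda>t. u t i) (\<lambda>t. u' t i) a b"
    and "AE t in lebesgue. t \<in> T \<longrightarrow>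
           (\<forall>i. \<epsilon> * u' t i + \<epsilon> * graph_laplacian w r (u t) i - u t i + graph_mean w r (u t)
                 = \<beta> t i - graph_mean w r (\<beta> t))
           \<and> \<beta> t \<in> Bset (u t)"
  shows "AE t in lebesgue. t \<in> T \<longrightarrow> (\<forall>i.
           (u t i = 0 \<longrightarrow> \<beta> t i - graph_mean w r (\<beta> t)
               = graph_mean w r (u t) + \<epsilon> * graph_laplacian w r (u t) i)
         \<and> (0 < u t i \<and> u t i < 1 \<longrightarrow> \<beta> t i - graph_mean w r (\<beta> t) = - graph_mean w r (\<beta> t))
         \<and> (u t i = 1 \<longrightarrow> \<beta> t i - graph_mean w r (\<beta> t)
               = graph_mean w r (u t) - 1 + \<epsilon> * graph_laplacian w r (u t) i))"
proof -
  have "AE t in lebesgue. t \<in> T \<longrightarrow> (u t i = 0 \<or> u t i = 1) \<longrightarrow> u' t i = 0" for i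
    using assms(5,7,8,9) by (intro weak_deriv_AE_eq_0_on_contact_set) auto
  then have "AE t in lebesgue. \<forall>i\<in>UNIV. t \<in> T \<longrightarrow> (u t i = 0 \<or> u t i = 1) \<longrightarrow> u' t i = 0"
    by (rule AE_finite_allI[OF finite])
  with assms(10) show ?thesis
  proof eventually_elim
    case (elim t)
    show ?case (is "_ \<longrightarrow> (\<forall>i. ?identities i)")
    proof (intro impI allI)
      fix i
      assume "t \<in> T"
      then have "\<epsilon> * u' t i + \<epsilon> * graph_laplacian w r (u t) i - u t i + graph_mean w r (u t)
          = \<beta> t i - graph_mean w r (\<beta> t)"
        and "\<beta> t \<in> Bset (u t)" and "u t i = 0 \<or> u t i = 1 \<Longrightarrow> u' t i = 0"
        and "\<forall>j. u t j \<in> {0..1}"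
        using elim assms(8) by blast+
      then show "?identities i"
        by (auto simp: Bset_def)
    qed
  qed
qed

end
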